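(* For any real $\lambda$ and any $0<y<\pi/2$, \[ \left(\lambda\int_0^y \frac{\cos \lambda t}{\cos t}\,dt\right)^2+ \left(\lambda\int_0^y \frac{\sin \lambda t}{\cos t}\,dt-1\right)^2<\frac{1}{\cos^2 y}. \] *)

theory Defs
  imports "HOL-Analysis.Analysis"
begin

end

theory Submission
  imports Defs
begin

text \<open>Put \<open>u = \<lambda> \<integral>\<^sub>0\<^sup>t cos \<lambda>s / cos s ds\<close> and \<open>v = \<lambda> \<integral>\<^sub>0\<^sup>t sin \<lambda>s / cos s ds - 1\<close>,
  and rotate \<open>(u, v)\<close> by the angle \<open>-\<lambda>t\<close> to get \<open>(P, Q)\<close>. Then \<open>P\<^sup>2 + Q\<^sup>2 = u\<^sup>2 + v\<^sup>2\<close>, and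
  \<open>(P, Q)\<close> solves \<open>P' = \<lambda> (sec t - Q)\<close>, \<open>Q' = \<lambda> P\<close> with \<open>P(0) = 0\<close>, \<open>Q(0) = 1\<close>.
  Along solutions the function
  \<open>sec\<^sup>2 t - P\<^sup>2 - Q\<^sup>2 - R(t) ((sec' t - \<lambda> P)\<^sup>2 + \<lambda>\<^sup>2 (sec t - Q)\<^sup>2)\<close>
  with \<open>R = sec / sec'' = cos\<^sup>2 / (2 - cos\<^sup>2)\<close> has derivative \<open>-R'\<close> times the
  (nonnegative) bracket, and \<open>R\<close> decreases on \<open>[0, \<pi>/2)\<close>. It vanishes at \<open>0\<close>, so it is
  nonnegative, which gives \<open>P\<^sup>2 + Q\<^sup>2 \<le> sec\<^sup>2\<close>; equality would force the bracket to vanish,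
  which is impossible for \<open>t > 0\<close>.\<close>

definition sec_defect :: "real \<Rightarrow> real \<Rightarrow> real \<Rightarrow> real \<Rightarrow> real" where
  "sec_defect lambda p q t = (sin t / (cos t)\<^sup>2 - lambda * p)\<^sup>2 + lambda\<^sup>2 * (1 / cos t - q)\<^sup>2"

definition sec_lyapunov :: "real \<Rightarrow> real \<Rightarrow> real \<Rightarrow> real \<Rightarrow> real" where
  "sec_lyapunov lambda p q t =
     (1 / cos t)\<^sup>2 - p\<^sup>2 - q\<^sup>2 - (cos t)\<^sup>2 / (2 - (cos t)\<^sup>2) * sec_defect lambda p q t"

lemma sec_defect_nonneg: "0 \<le> sec_defect lambda p q t"
  by (simp add: sec_defect_def)

lemma cos_squared_less_two: "(cos t)\<^sup>2 < (2::real)"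
proof -
  have "(cos t)\<^sup>2 \<le> 1"
    using abs_cos_le_one[of t] by (simp add: abs_square_le_1)
  then show ?thesis by simp
qed

lemma has_real_derivative_sec:
  assumes "cos t \<noteq> 0"
  shows "((\<lambda>s. 1 / cos s) has_real_derivative sin t / (cos t)\<^sup>2) (at t within A)"
  using assms by (auto intro!: derivative_eq_intros simp: power2_eq_square)

lemma has_real_derivative_sec_deriv:
  assumes "cos t \<noteq> 0"
  shows "((\<lambda>s. sin s / (cos s)\<^sup>2) has_real_derivative (2 - (cos t)\<^sup>2) / cos t ^ 3) (at t within A)"
  using assms
  apply (intro derivative_eq_intros refl)
      apply (simp_all add: field_simps power2_eq_square power3_eq_cube)
  using sin_cos_squared_add3[of t] by algebra

lemma has_real_derivative_sec_weight:
  "((\<lambda>s. (cos s)\<^sup>2 / (2 - (cos s)\<^sup>2)) has_real_derivative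
     - 4 * cos t * sin t / (2 - (cos t)\<^sup>2)\<^sup>2) (at t within A)"
  using cos_squared_less_two[of t]
  by (auto intro!: derivative_eq_intros simp: field_simps power2_eq_square)

text \<open>Since the weight times \<open>sec''\<close> is \<open>sec\<close>, all terms of the derivative cancel
  except the one coming from the derivative of the weight.\<close>

lemma sec_lyapunov_has_derivative:
  assumes "cos t \<noteq> 0"
    and dP: "(P has_real_derivative lambda * (1 / cos t - Q t)) (at t within A)"
    and dQ: "(Q has_real_derivative lambda * P t) (at t within A)"
  shows "((\<lambda>s. sec_lyapunov lambda (P s) (Q s) s) has_real_derivative
           4 * cos t * sin t / (2 - (cos t)\<^sup>2)\<^sup>2 * sec_defect lambda (P t) (Q t) t) (at t within A)"
proof -
  define S where "S = (\<lambda>s::real. 1 / cos s)"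
  define S1 where "S1 = (\<lambda>s::real. sin s / (cos s)\<^sup>2)"
  define S2 where "S2 = (\<lambda>s::real. (2 - (cos s)\<^sup>2) / cos s ^ 3)"
  define R where "R = (\<lambda>s::real. (cos s)\<^sup>2 / (2 - (cos s)\<^sup>2))"
  have dS: "(S has_real_derivative S1 t) (at t within A)"
    unfolding S_def S1_def using has_real_derivative_sec[OF assms(1)] .
  have dS1: "(S1 has_real_derivative S2 t) (at t within A)"
    unfolding S1_def S2_def using has_real_derivative_sec_deriv[OF assms(1)] .
  have dR: "(R has_real_derivative - 4 * cos t * sin t / (2 - (cos t)\<^sup>2)\<^sup>2) (at t within A)"
    unfolding R_def by (rule has_real_derivative_sec_weight)
  have weight: "R t * S2 t = S t"
    using assms cos_squared_less_two[of t] unfolding R_def S_def S2_def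
    by (simp add: field_simps power2_eq_square power3_eq_cube)
  have dP': "(P has_real_derivative lambda * (S t - Q t)) (at t within A)"
    using dP by (simp add: S_def)
  have "((\<lambda>s. (S s)\<^sup>2 - (P s)\<^sup>2 - (Q s)\<^sup>2
              - R s * ((S1 s - lambda * P s)\<^sup>2 + lambda\<^sup>2 * (S s - Q s)\<^sup>2))
        has_real_derivative
          4 * cos t * sin t / (2 - (cos t)\<^sup>2)\<^sup>2
          * ((S1 t - lambda * P t)\<^sup>2 + lambda\<^sup>2 * (S t - Q t)\<^sup>2)) (at t within A)"
    apply (rule derivative_eq_intros dS dS1 dP' dQ dR refl)+
    apply (simp add: power2_eq_square)
    using weight[symmetric] by (simp add: algebra_simps)
  then show ?thesis
    by (simp add: sec_lyapunov_def sec_defect_def S_def S1_def R_def)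
qed

lemma sec_lyapunov_mono:
  assumes "0 \<le> a" "a \<le> b" "b < pi / 2"
    and dP: "\<And>t. t \<in> {a..b} \<Longrightarrow>
               (P has_real_derivative lambda * (1 / cos t - Q t)) (at t within {a..b})"
    and dQ: "\<And>t. t \<in> {a..b} \<Longrightarrow> (Q has_real_derivative lambda * P t) (at t within {a..b})"
  shows "sec_lyapunov lambda (P a) (Q a) a \<le> sec_lyapunov lambda (P b) (Q b) b"
proof (cases "a = b")
  case False
  define D' where "D' = (\<lambda>t. 4 * cos t * sin t / (2 - (cos t)\<^sup>2)\<^sup>2 * sec_defect lambda (P t) (Q t) t)"
  have cos_pos: "0 < cos t" if "t \<in> {a..b}" for t
    using that assms by (intro cos_gt_zero_pi) auto
  have "\<exists>x\<in>{a<..<b}. sec_lyapunov lambda (P b) (Q b) b - sec_lyapunov lambda (P a) (Q a) a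
                      = D' x * (b - a)"
  proof (rule mvt_simple)
    show "a < b" using False assms by simp
    show "((\<lambda>s. sec_lyapunov lambda (P s) (Q s) s) has_derivative (*) (D' t)) (at t within {a..b})"
      if "a \<le> t" "t \<le> b" for t
      using sec_lyapunov_has_derivative[OF _ dP dQ, of t] cos_pos[of t] that
      by (simp add: D'_def has_field_derivative_def)
  qed
  then obtain x where x: "x \<in> {a<..<b}"
    and eq: "sec_lyapunov lambda (P b) (Q b) b - sec_lyapunov lambda (P a) (Q a) a = D' x * (b - a)"
    by blast
  have "0 \<le> sin x"
    using x assms by (intro sin_ge_zero) auto
  then have "0 \<le> D' x"
    using cos_pos[of x] x unfolding D'_def by (simp add: sec_defect_nonneg)
  moreover have "a < b" using x by simp
  ultimately show ?thesis using eq by (smt (verit) mult_nonneg_nonneg)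
qed simp

lemma sec_system_sum_squares_less:
  assumes "0 < y" "y < pi / 2" "P 0 = 0" "Q 0 = 1"
    and dP: "\<And>t. t \<in> {0..y} \<Longrightarrow>
               (P has_real_derivative lambda * (1 / cos t - Q t)) (at t within {0..y})"
    and dQ: "\<And>t. t \<in> {0..y} \<Longrightarrow> (Q has_real_derivative lambda * P t) (at t within {0..y})"
  shows "(P y)\<^sup>2 + (Q y)\<^sup>2 < (1 / cos y)\<^sup>2"
proof (rule ccontr)
  assume not_less: "\<not> ?thesis"
  define N where "N = sec_defect lambda (P y) (Q y) y"
  define w where "w = (cos y)\<^sup>2 / (2 - (cos y)\<^sup>2)"
  have "sec_lyapunov lambda (P 0) (Q 0) 0 = 0"
    using assms by (simp add: sec_lyapunov_def sec_defect_def)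
  then have "0 \<le> sec_lyapunov lambda (P y) (Q y) y"
    using sec_lyapunov_mono[of 0 y, OF _ _ _ dP dQ] assms by simp
  then have bound: "(P y)\<^sup>2 + (Q y)\<^sup>2 + w * N \<le> (1 / cos y)\<^sup>2"
    unfolding sec_lyapunov_def N_def w_def by simp
  have "0 < cos y" "0 < sin y"
    using assms by (auto intro: cos_gt_zero_pi sin_gt_zero)
  then have "0 < w" "0 < sin y / (cos y)\<^sup>2"
    using cos_squared_less_two[of y] by (simp_all add: w_def)
  moreover have "0 \<le> N"
    unfolding N_def by (rule sec_defect_nonneg)
  ultimately have "N = 0"
    using bound not_less by (smt (verit) mult_pos_pos)
  then have "sin y / (cos y)\<^sup>2 = lambda * P y" "lambda\<^sup>2 * (1 / cos y - Q y)\<^sup>2 = 0"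
    unfolding N_def sec_defect_def by (simp_all add: add_nonneg_eq_0_iff)
  with \<open>0 < sin y / (cos y)\<^sup>2\<close> have "P y \<noteq> 0" "Q y = 1 / cos y"
    by auto
  then show False
    using bound \<open>0 < w\<close> \<open>0 \<le> N\<close> by (smt (verit) mult_nonneg_nonneg zero_less_power2)
qed

lemma rotation_sum_squares:
  fixes u v a :: real
  shows "(u * cos a + v * sin a)\<^sup>2 + (u * sin a - v * cos a)\<^sup>2 = u\<^sup>2 + v\<^sup>2"
  using sin_cos_squared_add[of a] by algebra

lemma rotated_has_real_derivative:
  fixes u v :: "real \<Rightarrow> real"
  assumes du: "(u has_real_derivative lambda * (cos (lambda * t) / c)) (at t within A)"
    and dv: "(v has_real_derivative lambda * (sin (lambda * t) / c)) (at t within A)"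
  shows "((\<lambda>s. u s * cos (lambda * s) + v s * sin (lambda * s)) has_real_derivative
           lambda * (1 / c - (u t * sin (lambda * t) - v t * cos (lambda * t)))) (at t within A)"
    and "((\<lambda>s. u s * sin (lambda * s) - v s * cos (lambda * s)) has_real_derivative
           lambda * (u t * cos (lambda * t) + v t * sin (lambda * t))) (at t within A)"
proof -
  have "lambda * (cos (lambda * t) / c) * cos (lambda * t) + lambda * (sin (lambda * t) / c) * sin (lambda * t)
        = lambda * ((sin (lambda * t))\<^sup>2 + (cos (lambda * t))\<^sup>2) / c"
    by (simp add: power2_eq_square add_divide_distrib distrib_left)
  also have "\<dots> = lambda / c"
    by simp
  finally show "((\<lambda>s. u s * cos (lambda * s) + v s * sin (lambda * s)) has_real_derivative
           lambda * (1 / c - (u t * sin (lambda * t) - v t * cos (lambda * t)))) (at t within A)"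
    by (auto intro!: derivative_eq_intros du dv simp: algebra_simps)
  show "((\<lambda>s. u s * sin (lambda * s) - v s * cos (lambda * s)) has_real_derivative
           lambda * (u t * cos (lambda * t) + v t * sin (lambda * t))) (at t within A)"
    by (auto intro!: derivative_eq_intros du dv simp: field_simps)
qed

theorem theorem2:
  fixes lambda y :: real
  assumes "0 < y" and "y < pi / 2"
  shows "(lambda * integral {0..y} (\<lambda>t. cos (lambda * t) / cos t))\<^sup>2
         + (lambda * integral {0..y} (\<lambda>t. sin (lambda * t) / cos t) - 1)\<^sup>2
         < 1 / (cos y)\<^sup>2"
proof -
  define u where "u t = lambda * integral {0..t} (\<lambda>s. cos (lambda * s) / cos s)" for t
  define v where "v t = lambda * integral {0..t} (\<lambda>s. sin (lambda * s) / cos s) - 1" for t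
  have cos_pos: "0 < cos t" if "t \<in> {0..y}" for t
    using that assms by (intro cos_gt_zero_pi) auto
  have "continuous_on {0..y} (\<lambda>s. cos (lambda * s) / cos s)"
    and "continuous_on {0..y} (\<lambda>s. sin (lambda * s) / cos s)"
    by (intro continuous_intros; fastforce dest: cos_pos)+
  then have du: "(u has_real_derivative lambda * (cos (lambda * t) / cos t)) (at t within {0..y})"
    and dv: "(v has_real_derivative lambda * (sin (lambda * t) / cos t)) (at t within {0..y})"
    if "t \<in> {0..y}" for t
    unfolding u_def v_def using that
    by (auto intro!: derivative_eq_intros integral_has_real_derivative)
  have "u 0 = 0" "v 0 = -1"
    by (simp_all add: u_def v_def)
  have "(u y * cos (lambda * y) + v y * sin (lambda * y))\<^sup>2
        + (u y * sin (lambda * y) - v y * cos (lambda * y))\<^sup>2 < (1 / cos y)\<^sup>2"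
    using assms rotated_has_real_derivative[OF du dv] \<open>u 0 = 0\<close> \<open>v 0 = -1\<close>
    by (intro sec_system_sum_squares_less) auto
  then show ?thesis
    by (simp add: rotation_sum_squares u_def v_def power_one_over)
qed

end
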